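(* Let $L$ be an $R_0$-algebra and $k\in[0,1)$. If $\mu$ is a strong $(\in,\in\vee q_k)$-fuzzy fated filter of $L$, then for every $t\in(\tfrac{1-k}{2},1]$ the set $Q_k(\mu;t)=\{x\in L\mid \mu(x)+t+k>1\}$ is either empty or a fated filter of $L$.
   Context: An $R_0$-algebra is a bounded distributive lattice $(L,\wedge,\vee,0,1)$ with an order-reversing involution $\neg$ and a binary operation $\to$ such that for all $x,y,z\in L$: $x\to y=\neg y\to\neg x$; $1\to x=x$; $(y\to z)\wedge((x\to y)\to(x\to z))=y\to z$; $x\to(y\to z)=y\to(x\to z)$; $x\to(y\vee z)=(x\to y)\vee(x\to z)$; $(x\to y)\vee((x\to y)\to(\neg x\vee y))=1$. A fated filter of $L$ is a nonempty subset $A\subseteq L$ with $1\in A$ such that for all $x,y\in L$ and $a\in A$, $a\to((x\to y)\to x)\in A$ implies $x\in A$. For $x\in L$, $t\in(0,1]$ and a fuzzy subset $\mu:L\to[0,1]$: $x_t\in\mu$ iff $\mu(x)\ge t$; $x_t\,q_k\,\mu$ iff $\mu(x)+t+k>1$; $x_t\in\vee q_k\,\mu$ iff $x_t\in\mu$ or $x_t\,q_k\,\mu$. A strong $(\in,\in\vee q_k)$-fuzzy fated filter of $L$ is a fuzzy subset $\mu$ such that $\mu(1)\ge\mu(x)$ for all $x\in L$, and for all $x,a,y\in L$, $t,s\in(0,1]$: if $(a\to((x\to y)\to x))_t\in\mu$ and $a_s\in\mu$ then $x_{\min\{t,s\}}\in\vee q_k\,\mu$. *)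

theory Defs
  imports Main "HOL.Real"
begin

definition R0_algebra :: "('a::{distrib_lattice,bounded_lattice} \<Rightarrow> 'a) \<Rightarrow> ('a \<Rightarrow> 'a \<Rightarrow> 'a) \<Rightarrow> bool" where
  "R0_algebra neg imp \<longleftrightarrow>
     (\<forall>x. neg (neg x) = x) \<and>
     (\<forall>x y. x \<le> y \<longrightarrow> neg y \<le> neg x) \<and>
     (\<forall>x y. imp x y = imp (neg y) (neg x)) \<and>
     (\<forall>x. imp top x = x) \<and>
     (\<forall>x y z. inf (imp y z) (imp (imp x y) (imp x z)) = imp y z) \<and>
     (\<forall>x y z. imp x (imp y z) = imp y (imp x z)) \<and>
     (\<forall>x y z. imp x (sup y z) = sup (imp x y) (imp x z)) \<and>
     (\<forall>x y. sup (imp x y) (imp (imp x y) (sup (neg x) y)) = top)"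

definition fated_filter :: "('a::{distrib_lattice,bounded_lattice} \<Rightarrow> 'a \<Rightarrow> 'a) \<Rightarrow> 'a set \<Rightarrow> bool" where
  "fated_filter imp A \<longleftrightarrow> A \<noteq> {} \<and> top \<in> A \<and>
     (\<forall>x y a. a \<in> A \<longrightarrow> imp a (imp (imp x y) x) \<in> A \<longrightarrow> x \<in> A)"

definition strong_in_inq_fuzzy_fated_filter ::
  "real \<Rightarrow> ('a::{distrib_lattice,bounded_lattice} \<Rightarrow> 'a \<Rightarrow> 'a) \<Rightarrow> ('a \<Rightarrow> real) \<Rightarrow> bool" where
  "strong_in_inq_fuzzy_fated_filter k imp \<mu> \<longleftrightarrow>
     (\<forall>x. 0 \<le> \<mu> x \<and> \<mu> x \<le> 1) \<and>
     (\<forall>x. \<mu> top \<ge> \<mu> x) \<and>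
     (\<forall>x a y t s. 0 < t \<longrightarrow> t \<le> 1 \<longrightarrow> 0 < s \<longrightarrow> s \<le> 1 \<longrightarrow>
        \<mu> (imp a (imp (imp x y) x)) \<ge> t \<longrightarrow> \<mu> a \<ge> s \<longrightarrow>
        (\<mu> x \<ge> min t s \<or> \<mu> x + min t s + k > 1))"

definition Qk :: "real \<Rightarrow> ('a \<Rightarrow> real) \<Rightarrow> real \<Rightarrow> 'a set" where
  "Qk k \<mu> t = {x. \<mu> x + t + k > 1}"

end

theory Submission
  imports Defs
begin

text \<open>Since \<open>t > (1 - k)/2\<close>, the level \<open>t\<close> is itself quasi-coincident with
itself (\<open>t + t + k > 1\<close>). Applying the strong filter condition at the levels
\<open>min \<mu>(p) t\<close> and \<open>min \<mu>(a) t\<close> for \<open>p = a \<rightarrow> ((x \<rightarrow> y) \<rightarrow> x)\<close> and \<open>a\<close> in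
\<open>Q\<^sub>k(\<mu>;t)\<close> therefore gives a level \<open>r \<le> t\<close> with \<open>r + t + k > 1\<close>, and either
alternative of the conclusion then puts \<open>x\<close> into \<open>Q\<^sub>k(\<mu>;t)\<close>.\<close>

lemma top_mem_Qk:
  assumes "\<And>x. \<mu> x \<le> \<mu> top" and "Qk k \<mu> t \<noteq> {}"
  shows "top \<in> Qk k \<mu> t"
proof -
  obtain x where "\<mu> x + t + k > 1" using assms(2) by (auto simp: Qk_def)
  with assms(1)[of x] show ?thesis by (simp add: Qk_def)
qed

lemma Qk_fated_closed:
  assumes \<mu>: "strong_in_inq_fuzzy_fated_filter k imp \<mu>"
    and "0 < t" "t \<le> 1" "1 - k < 2 * t"
    and a: "a \<in> Qk k \<mu> t" and p: "imp a (imp (imp x y) x) \<in> Qk k \<mu> t"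
  shows "x \<in> Qk k \<mu> t"
proof -
  let ?p = "\<mu> (imp a (imp (imp x y) x))"
  have range: "\<And>z. 0 \<le> \<mu> z \<and> \<mu> z \<le> 1"
    and strong: "\<And>t s. 0 < t \<Longrightarrow> t \<le> 1 \<Longrightarrow> 0 < s \<Longrightarrow> s \<le> 1 \<Longrightarrow>
        ?p \<ge> t \<Longrightarrow> \<mu> a \<ge> s \<Longrightarrow> \<mu> x \<ge> min t s \<or> \<mu> x + min t s + k > 1"
    using \<mu> unfolding strong_in_inq_fuzzy_fated_filter_def by blast+
  have p_q: "?p + t + k > 1" and a_q: "\<mu> a + t + k > 1"
    using a p by (auto simp: Qk_def)
  show ?thesis
  proof (cases "0 < ?p \<and> 0 < \<mu> a")
    case True
    define r where "r = min (min ?p t) (min (\<mu> a) t)"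
    have "\<mu> x \<ge> r \<or> \<mu> x + r + k > 1"
      unfolding r_def using True assms(2,3) range[of a]
      by (intro strong) auto
    moreover have "r + t + k > 1" "r \<le> t"
      using p_q a_q \<open>1 - k < 2 * t\<close> by (auto simp: r_def)
    ultimately show ?thesis by (auto simp: Qk_def)
  next
    case False
    \<comment> \<open>then \<open>t + k > 1\<close> already, and \<open>\<mu> x \<ge> 0\<close> suffices\<close>
    with p_q a_q range[of x] show ?thesis by (auto simp: Qk_def)
  qed
qed

theorem corollary3p22:
  fixes neg :: "'a::{distrib_lattice,bounded_lattice} \<Rightarrow> 'a"
    and imp :: "'a \<Rightarrow> 'a \<Rightarrow> 'a"
    and \<mu> :: "'a \<Rightarrow> real" and k t :: real
  assumes "R0_algebra neg imp"
    and "0 \<le> k" and "k < 1"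
    and "strong_in_inq_fuzzy_fated_filter k imp \<mu>"
    and "(1 - k) / 2 < t" and "t \<le> 1"
  shows "Qk k \<mu> t = {} \<or> fated_filter imp (Qk k \<mu> t)"
proof (cases "Qk k \<mu> t = {}")
  case False
  have "top \<in> Qk k \<mu> t"
    using assms(4) False by (intro top_mem_Qk) (auto simp: strong_in_inq_fuzzy_fated_filter_def)
  moreover have "0 < t" "1 - k < 2 * t"
    using assms(3,5) by (simp_all add: field_simps)
  ultimately show ?thesis
    using Qk_fated_closed[OF assms(4) _ assms(6)] False
    unfolding fated_filter_def by blast
qed simp

end
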